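(* Let $\mathcal R=(V,E)$ be the Rado graph, let $w\notin V$, and let $\mathcal R'$ be the graph with vertex set $V\cup\{w\}$ and edge set $E\cup\{\{w,x\}:x\in V\}$. Then $\mathcal R'$ is IH-homogeneous but not IE-homogeneous.
   Context: All graphs are undirected and loopless; subgraphs are induced. The Rado graph is the unique countable graph such that for all finite disjoint vertex sets $A,B$ there is a vertex adjacent to all of $A$ and to none of $B$. $G$ is IH-homogeneous (resp. IE-homogeneous) if every isomorphism between finite induced subgraphs of $G$ is the restriction of an endomorphism (resp. a surjective endomorphism) of $G$, where an endomorphism is a map $G\to G$ sending adjacent vertices to adjacent vertices. *)

theory Defs
  imports Main "HOL-Library.Countable_Set"
begin

definition is_graph :: "'a set \<Rightarrow> ('a \<Rightarrow> 'a \<Rightarrow> bool) \<Rightarrow> bool" where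
  "is_graph V E \<longleftrightarrow> (\<forall>x\<in>V. \<forall>y\<in>V. E x y \<longrightarrow> E y x) \<and> (\<forall>x\<in>V. \<not> E x x)"

definition is_rado :: "'a set \<Rightarrow> ('a \<Rightarrow> 'a \<Rightarrow> bool) \<Rightarrow> bool" where
  "is_rado V E \<longleftrightarrow> is_graph V E \<and> countable V \<and>
     (\<forall>A B. finite A \<and> finite B \<and> A \<subseteq> V \<and> B \<subseteq> V \<and> A \<inter> B = {} \<longrightarrow>
        (\<exists>z\<in>V. (\<forall>a\<in>A. E z a) \<and> (\<forall>b\<in>B. \<not> E z b)))"

definition finite_induced_iso :: "'a set \<Rightarrow> ('a \<Rightarrow> 'a \<Rightarrow> bool) \<Rightarrow> 'a set \<Rightarrow> 'a set \<Rightarrow> ('a \<Rightarrow> 'a) \<Rightarrow> bool" where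
  "finite_induced_iso V E A B f \<longleftrightarrow> finite A \<and> A \<subseteq> V \<and> B \<subseteq> V \<and> bij_betw f A B \<and>
     (\<forall>x\<in>A. \<forall>y\<in>A. E x y \<longleftrightarrow> E (f x) (f y))"

definition endomorphism :: "'a set \<Rightarrow> ('a \<Rightarrow> 'a \<Rightarrow> bool) \<Rightarrow> ('a \<Rightarrow> 'a) \<Rightarrow> bool" where
  "endomorphism V E g \<longleftrightarrow> g ` V \<subseteq> V \<and> (\<forall>x\<in>V. \<forall>y\<in>V. E x y \<longrightarrow> E (g x) (g y))"

definition IH_homogeneous :: "'a set \<Rightarrow> ('a \<Rightarrow> 'a \<Rightarrow> bool) \<Rightarrow> bool" where
  "IH_homogeneous V E \<longleftrightarrow> (\<forall>A B f. finite_induced_iso V E A B f \<longrightarrow>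
     (\<exists>g. endomorphism V E g \<and> (\<forall>x\<in>A. g x = f x)))"

definition IE_homogeneous :: "'a set \<Rightarrow> ('a \<Rightarrow> 'a \<Rightarrow> bool) \<Rightarrow> bool" where
  "IE_homogeneous V E \<longleftrightarrow> (\<forall>A B f. finite_induced_iso V E A B f \<longrightarrow>
     (\<exists>g. endomorphism V E g \<and> g ` V = V \<and> (\<forall>x\<in>A. g x = f x)))"

definition add_cone :: "'a set \<Rightarrow> ('a \<Rightarrow> 'a \<Rightarrow> bool) \<Rightarrow> 'a \<Rightarrow> ('a \<Rightarrow> 'a \<Rightarrow> bool)" where
  "add_cone V E w = (\<lambda>x y. (x \<in> V \<and> y \<in> V \<and> E x y) \<or> (x = w \<and> y \<in> V) \<or> (y = w \<and> x \<in> V))"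

end

theory Submission
  imports Defs
begin

text \<open>Every finite set of vertices of the cone over the Rado graph has a common neighbour: a vertex
  of the Rado graph adjacent to its part in the Rado graph is also adjacent to the apex. In a countable
  irreflexive graph with this property a homomorphism defined on a finite set extends to the whole
  graph: enumerate the vertices and send each new vertex outside the domain to a common neighbour of
  all earlier images and of the images of the domain. It is not
  IE-homogeneous: the apex can be mapped to a vertex of the Rado graph by an isomorphism of one-vertex
  subgraphs, but a surjective endomorphism maps a vertex adjacent to all others onto a vertex adjacent
  to all others, and no vertex of the Rado graph is.\<close>

definition has_common_neighbours :: "'a set \<Rightarrow> ('a \<Rightarrow> 'a \<Rightarrow> bool) \<Rightarrow> bool" where
  "has_common_neighbours X R \<longleftrightarrow>
     (\<forall>S. finite S \<and> S \<subseteq> X \<longrightarrow> (\<exists>t\<in>X. \<forall>s\<in>S. R t s \<and> R s t))"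

context
  fixes X :: "'a set" and R :: "'a \<Rightarrow> 'a \<Rightarrow> bool" and A :: "'a set" and f :: "'a \<Rightarrow> 'a"
begin

definition next_image :: "'a set \<Rightarrow> 'a \<Rightarrow> 'a" where
  "next_image S x = (if x \<in> A then f x else SOME t. t \<in> X \<and> (\<forall>s\<in>S \<union> f ` A. R t s \<and> R s t))"

primrec image_list :: "nat \<Rightarrow> 'a list" where
  "image_list 0 = []"
| "image_list (Suc n) = image_list n @ [next_image (set (image_list n)) (from_nat_into X n)]"

definition extension :: "'a \<Rightarrow> 'a" where
  "extension x = next_image (set (image_list (to_nat_on X x))) x"

lemma length_image_list: "length (image_list n) = n"
  by (induction n) simp_all

lemma nth_image_list:
  "k < n \<Longrightarrow> image_list n ! k = next_image (set (image_list k)) (from_nat_into X k)"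
proof (induction n)
  case (Suc n)
  then show ?case
    by (cases "k = n") (auto simp: nth_append length_image_list)
qed simp

lemma extension_mem_image_list:
  assumes "countable X" "y \<in> X" "to_nat_on X y < n"
  shows "extension y \<in> set (image_list n)"
proof -
  have "extension y = image_list n ! to_nat_on X y"
    using assms by (simp add: nth_image_list extension_def from_nat_into_to_nat_on)
  then show ?thesis
    using assms(3) by (simp add: length_image_list)
qed

context
  assumes common: "has_common_neighbours X R"
    and finA: "finite A" and fA: "f ` A \<subseteq> X"
begin

lemma next_image_common_neighbour:
  assumes "finite S" "S \<subseteq> X" "x \<notin> A"
  shows "next_image S x \<in> X \<and> (\<forall>s\<in>S \<union> f ` A. R (next_image S x) s \<and> R s (next_image S x))"
proof -
  let ?P = "\<lambda>t. t \<in> X \<and> (\<forall>s\<in>S \<union> f ` A. R t s \<and> R s t)"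
  have "finite (S \<union> f ` A)" "S \<union> f ` A \<subseteq> X"
    using assms(1,2) finA fA by auto
  then have "\<exists>t. ?P t"
    using common unfolding has_common_neighbours_def by blast
  then have "?P (SOME t. ?P t)"
    by (rule someI_ex)
  with assms(3) show ?thesis
    unfolding next_image_def by simp
qed

lemma next_image_in:
  assumes "finite S" "S \<subseteq> X"
  shows "next_image S x \<in> X"
proof (cases "x \<in> A")
  case True
  with fA show ?thesis
    unfolding next_image_def by auto
next
  case False
  with next_image_common_neighbour[OF assms] show ?thesis
    by blast
qed

lemma set_image_list_subset: "set (image_list n) \<subseteq> X"
  by (induction n) (simp_all add: next_image_in)

lemma extension_in: "extension x \<in> X"
  unfolding extension_def by (simp add: next_image_in set_image_list_subset)

lemma extension_common_neighbour:
  assumes "x \<notin> A" "s \<in> set (image_list (to_nat_on X x)) \<union> f ` A"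
  shows "R (extension x) s \<and> R s (extension x)"
  using next_image_common_neighbour[OF finite_set set_image_list_subset assms(1)] assms(2)
  unfolding extension_def by blast

lemma extension_adjacent_earlier:
  assumes "countable X" "y \<in> X" "to_nat_on X y < to_nat_on X x" and "x \<notin> A \<or> y \<notin> A"
  shows "R (extension x) (extension y) \<and> R (extension y) (extension x)"
proof (cases "x \<in> A")
  case True
  then have "extension x \<in> f ` A"
    unfolding extension_def next_image_def by simp
  with True assms(4) show ?thesis
    using extension_common_neighbour[of y "extension x"] by blast
next
  case False
  with extension_mem_image_list[OF assms(1-3)] show ?thesis
    using extension_common_neighbour[of x "extension y"] by blast
qed

lemma extension_extends: "x \<in> A \<Longrightarrow> extension x = f x"
  by (simp add: extension_def next_image_def)

lemma extension_endomorphism: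
  assumes countable: "countable X" and irrefl: "\<forall>x\<in>X. \<not> R x x"
    and hom: "\<forall>x\<in>A. \<forall>y\<in>A. R x y \<longrightarrow> R (f x) (f y)"
  shows "endomorphism X R extension"
  unfolding endomorphism_def
proof (intro conjI ballI impI)
  show "extension ` X \<subseteq> X"
    using extension_in by blast
  fix x y assume x: "x \<in> X" and y: "y \<in> X" and xy: "R x y"
  show "R (extension x) (extension y)"
  proof (cases "x \<in> A \<and> y \<in> A")
    case True
    with hom xy show ?thesis
      by (simp add: extension_extends)
  next
    case False
    have "x \<noteq> y"
      using irrefl x xy by blast
    then have "to_nat_on X x \<noteq> to_nat_on X y"
      using countable x y by (metis from_nat_into_to_nat_on)
    then consider "to_nat_on X y < to_nat_on X x" | "to_nat_on X x < to_nat_on X y"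
      by linarith
    then show ?thesis
    proof cases
      case 1
      with extension_adjacent_earlier[OF countable y 1] False show ?thesis by blast
    next
      case 2
      with extension_adjacent_earlier[OF countable x 2] False show ?thesis by blast
    qed
  qed
qed

end

end

lemma homomorphism_extends_to_endomorphism:
  assumes "countable X" "\<forall>x\<in>X. \<not> R x x" "has_common_neighbours X R"
    and "finite A" "f ` A \<subseteq> X" "\<forall>x\<in>A. \<forall>y\<in>A. R x y \<longrightarrow> R (f x) (f y)"
  shows "\<exists>g. endomorphism X R g \<and> (\<forall>x\<in>A. g x = f x)"
proof (intro exI conjI ballI)
  show "endomorphism X R (extension X R A f)"
    by (rule extension_endomorphism[OF assms(3-5,1,2,6)])
  show "extension X R A f x = f x" if "x \<in> A" for x
    by (rule extension_extends[OF assms(3-5) that])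
qed

lemma IH_homogeneous_if_common_neighbours:
  assumes "countable X" "\<forall>x\<in>X. \<not> R x x" "has_common_neighbours X R"
  shows "IH_homogeneous X R"
  unfolding IH_homogeneous_def
proof (intro allI impI)
  fix A B f assume "finite_induced_iso X R A B f"
  then have "finite A" "f ` A \<subseteq> X" "\<forall>x\<in>A. \<forall>y\<in>A. R x y \<longrightarrow> R (f x) (f y)"
    unfolding finite_induced_iso_def bij_betw_def by auto
  then show "\<exists>g. endomorphism X R g \<and> (\<forall>x\<in>A. g x = f x)"
    by (rule homomorphism_extends_to_endomorphism[OF assms])
qed

lemma surjective_endomorphism_preserves_dominating:
  assumes g: "endomorphism X R g" "g ` X = X"
    and w: "w \<in> X" "\<forall>u\<in>X - {w}. R w u"
    and y: "y \<in> X" "y \<noteq> g w"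
  shows "R (g w) y"
proof -
  obtain u where u: "u \<in> X" "y = g u"
    using g(2) y(1) by blast
  with y(2) have "u \<noteq> w" by blast
  with u w have "R w u" by blast
  with g(1) u w(1) show ?thesis
    unfolding endomorphism_def by blast
qed

lemma is_radoD:
  assumes "is_rado V E"
  shows "\<forall>x\<in>V. \<forall>y\<in>V. E x y \<longrightarrow> E y x" "\<forall>x\<in>V. \<not> E x x" "countable V"
    and "finite A \<Longrightarrow> finite B \<Longrightarrow> A \<subseteq> V \<Longrightarrow> B \<subseteq> V \<Longrightarrow> A \<inter> B = {} \<Longrightarrow>
      \<exists>z\<in>V. (\<forall>a\<in>A. E z a) \<and> (\<forall>b\<in>B. \<not> E z b)"
  using assms unfolding is_rado_def is_graph_def by simp_all

lemma rado_non_adjacent_pair: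
  assumes "is_rado V E"
  obtains x y where "x \<in> V" "y \<in> V" "x \<noteq> y" "\<not> E x y"
proof -
  note sym = is_radoD(1)[OF assms] and ext = is_radoD(4)[OF assms]
  obtain x where x: "x \<in> V"
    using ext[of "{}" "{}"] by auto
  obtain z where z: "z \<in> V" "E z x"
    using ext[of "{x}" "{}"] x by auto
  obtain y where y: "y \<in> V" "\<not> E y z" "\<not> E y x"
    using ext[of "{}" "{x, z}"] x z(1) by auto
  have "x \<noteq> y"
    using sym x y z by blast
  with x y that show ?thesis by blast
qed

lemma add_cone_common_neighbours:
  assumes "is_rado V E"
  shows "has_common_neighbours (insert w V) (add_cone V E w)"
  unfolding has_common_neighbours_def
proof (intro allI impI)
  fix S assume S: "finite S \<and> S \<subseteq> insert w V"
  then have "finite (S - {w})" "S - {w} \<subseteq> V"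
    by auto
  then obtain z where z: "z \<in> V" "\<forall>a\<in>S - {w}. E z a"
    using is_radoD(4)[OF assms, of "S - {w}" "{}"] by auto
  have "add_cone V E w z s \<and> add_cone V E w s z" if "s \<in> S" for s
  proof (cases "s = w")
    case False
    with S z that have "E z s" "s \<in> V" by auto
    with z(1) is_radoD(1)[OF assms] show ?thesis
      unfolding add_cone_def by blast
  qed (simp add: add_cone_def z(1))
  with z(1) show "\<exists>t\<in>insert w V. \<forall>s\<in>S. add_cone V E w t s \<and> add_cone V E w s t"
    by blast
qed

lemma add_cone_irrefl:
  assumes "is_rado V E" "w \<notin> V"
  shows "\<forall>x\<in>insert w V. \<not> add_cone V E w x x"
  using is_radoD(2)[OF assms(1)] assms(2) unfolding add_cone_def by blast

theorem mainTheorem20: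
  fixes V :: "'a set" and E :: "'a \<Rightarrow> 'a \<Rightarrow> bool" and w :: 'a
  assumes "is_rado V E" and "w \<notin> V"
  shows "IH_homogeneous (insert w V) (add_cone V E w) \<and>
         \<not> IE_homogeneous (insert w V) (add_cone V E w)"
proof
  let ?X = "insert w V" and ?R = "add_cone V E w"
  note irrefl = add_cone_irrefl[OF assms]
  show "IH_homogeneous ?X ?R"
    using is_radoD(3)[OF assms(1)] irrefl add_cone_common_neighbours[OF assms(1)]
    by (simp add: IH_homogeneous_if_common_neighbours)
  show "\<not> IE_homogeneous ?X ?R"
  proof
    assume "IE_homogeneous ?X ?R"
    obtain x y where xy: "x \<in> V" "y \<in> V" "x \<noteq> y" "\<not> E x y"
      using rado_non_adjacent_pair[OF assms(1)] by blast
    have "finite_induced_iso ?X ?R {w} {x} (\<lambda>_. x)"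
      using irrefl xy(1) unfolding finite_induced_iso_def by simp
    with \<open>IE_homogeneous ?X ?R\<close> obtain g where g: "endomorphism ?X ?R g" "g ` ?X = ?X" "g w = x"
      unfolding IE_homogeneous_def by fastforce
    have "\<forall>u\<in>?X - {w}. ?R w u"
      by (simp add: add_cone_def)
    with g xy have "?R x y"
      using surjective_endomorphism_preserves_dominating[OF g(1,2), of w y] by simp
    with xy assms(2) show False
      unfolding add_cone_def by blast
  qed
qed

end
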